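(* Let $p>0$ and let $f$ be twice continuously differentiable on $[0,p]$, such that $f'''$ exists and is bounded in a neighborhood of $s=0$. Then, as $b\to 0^+$, $$\int_0^p f(s)\left(\sqrt{s^2+b^2}-s\right)ds=-\frac{f(0)}{2}\,b^2\ln b+\left(\frac{f(0)}{4}+\frac{f(0)\ln 2}{2}+\frac{f(p)\ln p}{2}-\frac12\int_0^p f'(s)\ln s\,ds\right)b^2+O(b^3).$$ *)

theory Defs
  imports "HOL-Analysis.Analysis" "HOL-Library.Landau_Symbols"
begin

end

theory Submission
  imports Defs "HOL-Real_Asymp.Real_Asymp"
begin

text \<open>
  With r = sqrt (s^2 + b^2), the kernel r - s has explicit primitives G1 = gap_primitive b and
  G2 = gap_primitive2 b in s, normalised by G2(0) = 0. Integrating by parts twice,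
    int_0^p f (r - s) = [f G1 - f' G2]_0^p + int_0^p f'' G2,
  and G1(0) = b^2 ln b / 2 produces the b^2 ln b term. For s > 0, G1(s) equals
  b^2 (c + ln s / 2) up to b^3 / (2 s), and uniformly in s >= 0, G2(s) equals
  b^2 (c s + (s ln s - s) / 2) up to b^3, where c = 1/4 + ln 2 / 2. Replacing G1 and G2 by
  these leading parts and undoing the two integrations by parts (Taylor's formula for f(0), and
  int_0^p f' ln s = f'(p) (p ln p - p) - int_0^p f'' (s ln s - s)) gives exactly the b^2
  coefficient, and the remaining error is O(b^3) since f'' is bounded on [0, p].
\<close>

definition gap_primitive :: "real \<Rightarrow> real \<Rightarrow> real" where
  "gap_primitive b s = (s * sqrt (s\<^sup>2 + b\<^sup>2) - s\<^sup>2 + b\<^sup>2 * ln (s + sqrt (s\<^sup>2 + b\<^sup>2))) / 2"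

definition gap_primitive2 :: "real \<Rightarrow> real \<Rightarrow> real" where
  "gap_primitive2 b s = ((s\<^sup>2 - 2 * b\<^sup>2) * sqrt (s\<^sup>2 + b\<^sup>2) - s ^ 3
     + 3 * b\<^sup>2 * s * ln (s + sqrt (s\<^sup>2 + b\<^sup>2)) + 2 * b ^ 3) / 6"

lemma abs_less_sqrt_sum_squares:
  fixes b s :: real assumes "b \<noteq> 0"
  shows "\<bar>s\<bar> < sqrt (s\<^sup>2 + b\<^sup>2)"
proof -
  have "sqrt (s\<^sup>2) < sqrt (s\<^sup>2 + b\<^sup>2)" using assms by (intro real_sqrt_less_mono) simp
  then show ?thesis by simp
qed

lemma has_real_derivative_sqrt_sum_squares:
  fixes b s :: real assumes "b \<noteq> 0"
  shows "((\<lambda>s. sqrt (s\<^sup>2 + b\<^sup>2)) has_real_derivative s / sqrt (s\<^sup>2 + b\<^sup>2)) (at s)"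
proof -
  have "0 < s\<^sup>2 + b\<^sup>2" using assms by (simp add: sum_power2_gt_zero_iff)
  then show ?thesis by (auto intro!: derivative_eq_intros simp: field_simps)
qed

lemma has_real_derivative_ln_add_sqrt_sum_squares:
  fixes b s :: real assumes "b \<noteq> 0"
  shows "((\<lambda>s. ln (s + sqrt (s\<^sup>2 + b\<^sup>2))) has_real_derivative 1 / sqrt (s\<^sup>2 + b\<^sup>2)) (at s)"
proof -
  define R where "R = (\<lambda>s. sqrt (s\<^sup>2 + b\<^sup>2))"
  have dR: "(R has_real_derivative t / R t) (at t)" for t
    unfolding R_def by (rule has_real_derivative_sqrt_sum_squares[OF assms])
  have "\<bar>s\<bar> < R s" unfolding R_def by (rule abs_less_sqrt_sum_squares[OF assms])
  then have pos: "0 < R s" "0 < s + R s" by linarith+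
  have "((\<lambda>s. ln (s + R s)) has_real_derivative (1 + s / R s) / (s + R s)) (at s)"
    using pos by (auto intro!: derivative_eq_intros dR)
  also have "1 + s / R s = (s + R s) / R s" using pos by (simp add: field_simps)
  finally show ?thesis using pos unfolding R_def by simp
qed

lemma has_real_derivative_gap_primitive:
  fixes b s :: real assumes "b \<noteq> 0"
  shows "(gap_primitive b has_real_derivative sqrt (s\<^sup>2 + b\<^sup>2) - s) (at s)"
proof -
  define R where "R = (\<lambda>s. sqrt (s\<^sup>2 + b\<^sup>2))"
  define L where "L = (\<lambda>s. ln (s + R s))"
  have dR: "(R has_real_derivative t / R t) (at t)" for t
    unfolding R_def by (rule has_real_derivative_sqrt_sum_squares[OF assms])
  have dL: "(L has_real_derivative 1 / R t) (at t)" for t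
    unfolding L_def R_def by (rule has_real_derivative_ln_add_sqrt_sum_squares[OF assms])
  have "0 < s\<^sup>2 + b\<^sup>2" using assms by (simp add: sum_power2_gt_zero_iff)
  then have R: "0 < R s" "(s\<^sup>2 + b\<^sup>2) / R s = R s" by (simp_all add: R_def real_div_sqrt)
  have "((\<lambda>s. (s * R s - s\<^sup>2 + b\<^sup>2 * L s) / 2) has_real_derivative
      (R s + (s\<^sup>2 + b\<^sup>2) / R s - 2 * s) / 2) (at s)"
    using R(1) by (auto intro!: derivative_eq_intros dR dL simp: field_simps power2_eq_square)
  also have "(R s + (s\<^sup>2 + b\<^sup>2) / R s - 2 * s) / 2 = R s - s" unfolding R(2) by simp
  finally show ?thesis unfolding gap_primitive_def L_def R_def .
qed

lemma has_real_derivative_gap_primitive2: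
  fixes b s :: real assumes "b \<noteq> 0"
  shows "(gap_primitive2 b has_real_derivative gap_primitive b s) (at s)"
proof -
  define R where "R = (\<lambda>s. sqrt (s\<^sup>2 + b\<^sup>2))"
  define L where "L = (\<lambda>s. ln (s + R s))"
  have dR: "(R has_real_derivative t / R t) (at t)" for t
    unfolding R_def by (rule has_real_derivative_sqrt_sum_squares[OF assms])
  have dL: "(L has_real_derivative 1 / R t) (at t)" for t
    unfolding L_def R_def by (rule has_real_derivative_ln_add_sqrt_sum_squares[OF assms])
  have "0 < s\<^sup>2 + b\<^sup>2" using assms by (simp add: sum_power2_gt_zero_iff)
  then have R: "0 < R s" "(s\<^sup>2 + b\<^sup>2) / R s = R s" by (simp_all add: R_def real_div_sqrt)
  have "((\<lambda>s. ((s\<^sup>2 - 2 * b\<^sup>2) * R s - s ^ 3 + 3 * b\<^sup>2 * s * L s + 2 * b ^ 3) / 6)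
      has_real_derivative (2 * s * R s + s * ((s\<^sup>2 + b\<^sup>2) / R s) - 3 * s\<^sup>2 + 3 * b\<^sup>2 * L s) / 6) (at s)"
    using R(1) by (auto intro!: derivative_eq_intros dR dL simp: field_simps)
  also have "(2 * s * R s + s * ((s\<^sup>2 + b\<^sup>2) / R s) - 3 * s\<^sup>2 + 3 * b\<^sup>2 * L s) / 6
      = (s * R s - s\<^sup>2 + b\<^sup>2 * L s) / 2"
    unfolding R(2) by simp
  finally show ?thesis unfolding gap_primitive2_def gap_primitive_def L_def R_def .
qed

lemma gap_primitive_zero:
  fixes b :: real assumes "0 < b"
  shows "gap_primitive b 0 = b\<^sup>2 * ln b / 2"
  using assms unfolding gap_primitive_def by simp

lemma gap_primitive2_zero:
  fixes b :: real assumes "0 \<le> b"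
  shows "gap_primitive2 b 0 = 0"
  using assms by (simp add: gap_primitive2_def power3_eq_cube power2_eq_square)

lemma sqrt_sum_squares_minus_le:
  fixes b s :: real assumes "0 \<le> s" "0 \<le> b"
  shows "sqrt (s\<^sup>2 + b\<^sup>2) - s \<le> b"
proof -
  have "sqrt (s\<^sup>2 + b\<^sup>2) \<le> s + b"
    using assms by (intro real_le_lsqrt) (auto simp: power2_eq_square algebra_simps)
  then show ?thesis by simp
qed

lemma mult_sqrt_sum_squares_minus_le:
  fixes b s :: real assumes "0 \<le> s"
  shows "s * (sqrt (s\<^sup>2 + b\<^sup>2) - s) \<le> b\<^sup>2"
proof -
  define r where "r = sqrt (s\<^sup>2 + b\<^sup>2)"
  have "s \<le> r" unfolding r_def by (rule real_le_rsqrt) simp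
  then have "s * (r - s) \<le> (r + s) * (r - s)" using assms by (intro mult_right_mono) auto
  also have "\<dots> = b\<^sup>2" by (simp add: r_def algebra_simps power2_eq_square)
  finally show ?thesis unfolding r_def .
qed

lemma ln_add_sqrt_sum_squares_bounds:
  fixes b s :: real assumes "0 < s" "0 \<le> b"
  shows "0 \<le> ln (s + sqrt (s\<^sup>2 + b\<^sup>2)) - ln (2 * s)"
    and "ln (s + sqrt (s\<^sup>2 + b\<^sup>2)) - ln (2 * s) \<le> b / (2 * s)"
proof -
  define r where "r = sqrt (s\<^sup>2 + b\<^sup>2)"
  have "s \<le> r" unfolding r_def by (rule real_le_rsqrt) simp
  then have ge1: "1 \<le> (s + r) / (2 * s)" using assms by simp
  have eq: "ln (s + r) - ln (2 * s) = ln ((s + r) / (2 * s))"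
    using assms \<open>s \<le> r\<close> by (simp add: ln_div)
  show "0 \<le> ln (s + sqrt (s\<^sup>2 + b\<^sup>2)) - ln (2 * s)"
    using ge1 unfolding r_def[symmetric] eq by simp
  have "ln ((s + r) / (2 * s)) \<le> (s + r) / (2 * s) - 1"
    using ge1 by (intro ln_le_minus_one) simp
  also have "\<dots> = (r - s) / (2 * s)" using assms by (simp add: field_simps)
  also have "\<dots> \<le> b / (2 * s)"
    using sqrt_sum_squares_minus_le[of s b] assms by (simp add: r_def divide_right_mono)
  finally show "ln (s + sqrt (s\<^sup>2 + b\<^sup>2)) - ln (2 * s) \<le> b / (2 * s)"
    unfolding r_def[symmetric] eq .
qed

lemma gap_primitive_approx:
  fixes b s :: real assumes b: "0 < b" and s: "0 < s"
  shows "\<bar>gap_primitive b s - b\<^sup>2 * (1/4 + ln 2 / 2 + ln s / 2)\<bar> \<le> b ^ 3 / (2 * s)"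
proof -
  define r where "r = sqrt (s\<^sup>2 + b\<^sup>2)"
  have r2: "r\<^sup>2 = s\<^sup>2 + b\<^sup>2" by (simp add: r_def)
  have "s \<le> r" unfolding r_def by (rule real_le_rsqrt) simp
  define D where "D = (s * r - s\<^sup>2) / 2 - b\<^sup>2 / 4"
  define B where "B = b\<^sup>2 / 2 * (ln (s + r) - ln (2 * s))"
  have split: "gap_primitive b s - b\<^sup>2 * (1/4 + ln 2 / 2 + ln s / 2) = D + B"
    unfolding gap_primitive_def D_def B_def r_def[symmetric] using s by (simp add: ln_mult field_simps)
  have D_eq: "D * (4 * (r + s)) = - (b\<^sup>2 * (r - s))" unfolding D_def using r2 by algebra
  have "\<bar>D\<bar> * (4 * s) \<le> \<bar>D\<bar> * (4 * (r + s))"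
    using \<open>s \<le> r\<close> s by (intro mult_left_mono) auto
  also have "\<dots> = \<bar>D * (4 * (r + s))\<bar>" using s \<open>s \<le> r\<close> by (simp add: abs_mult)
  also have "\<dots> = b\<^sup>2 * (r - s)" unfolding D_eq using \<open>s \<le> r\<close> by (simp add: abs_mult)
  also have "\<dots> \<le> b\<^sup>2 * b"
    using sqrt_sum_squares_minus_le[of s b] s b by (intro mult_left_mono) (auto simp: r_def)
  finally have D: "\<bar>D\<bar> \<le> b ^ 3 / (4 * s)"
    using s by (simp add: field_simps power2_eq_square power3_eq_cube)
  have L: "0 \<le> ln (s + r) - ln (2 * s)" "ln (s + r) - ln (2 * s) \<le> b / (2 * s)"
    using ln_add_sqrt_sum_squares_bounds[OF s, of b] b by (simp_all add: r_def)
  have "B \<le> b\<^sup>2 / 2 * (b / (2 * s))" unfolding B_def using L by (intro mult_left_mono) auto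
  also have "\<dots> = b ^ 3 / (4 * s)" using s by (simp add: field_simps power2_eq_square power3_eq_cube)
  finally have B: "0 \<le> B" "B \<le> b ^ 3 / (4 * s)" unfolding B_def using L by simp_all
  have "b ^ 3 / (4 * s) + b ^ 3 / (4 * s) = b ^ 3 / (2 * s)" by simp
  then show ?thesis unfolding split using D B by linarith
qed

definition gap_primitive2_remainder :: "real \<Rightarrow> real \<Rightarrow> real" where
  "gap_primitive2_remainder b s = gap_primitive2 b s - b\<^sup>2 * ((1/4 + ln 2 / 2) * s + (s * ln s - s) / 2)"

lemma gap_primitive2_remainder_bound:
  fixes b s :: real assumes b: "0 < b" and s: "0 \<le> s"
  shows "\<bar>gap_primitive2_remainder b s\<bar> \<le> b ^ 3"
proof (cases "s = 0")
  case True
  then show ?thesis using b by (simp add: gap_primitive2_remainder_def gap_primitive2_zero)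
next
  case False
  with s have s: "0 < s" by simp
  define r where "r = sqrt (s\<^sup>2 + b\<^sup>2)"
  have r2: "r\<^sup>2 = s\<^sup>2 + b\<^sup>2" by (simp add: r_def)
  have "s \<le> r" "b \<le> r" unfolding r_def by (rule real_le_rsqrt, simp)+
  define A where "A = ((s\<^sup>2 - 2 * b\<^sup>2) * r - s ^ 3) / 6 + b\<^sup>2 * s / 4"
  define B where "B = b\<^sup>2 * s / 2 * (ln (s + r) - ln (2 * s))"
  have split: "gap_primitive2_remainder b s = A + b ^ 3 / 3 + B"
    unfolding gap_primitive2_remainder_def gap_primitive2_def A_def B_def r_def[symmetric] using s by (simp add: ln_mult field_simps)
  have A_eq: "A * (6 * (r + s)) = b\<^sup>2 * (s * (s - r) / 2 - 2 * b\<^sup>2)"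
    unfolding A_def using r2 by algebra
  have A_factor: "\<bar>s * (s - r) / 2 - 2 * b\<^sup>2\<bar> \<le> 5/2 * b\<^sup>2"
  proof -
    have "0 \<le> s * (r - s)" "s * (r - s) \<le> b\<^sup>2"
      using s \<open>s \<le> r\<close> mult_sqrt_sum_squares_minus_le[of s b] by (simp_all add: r_def)
    moreover have "s * (s - r) = - (s * (r - s))" by (simp add: algebra_simps)
    ultimately show ?thesis unfolding abs_le_iff by linarith
  qed
  have "\<bar>A\<bar> * (6 * b) \<le> \<bar>A\<bar> * (6 * (r + s))"
    using \<open>b \<le> r\<close> s by (intro mult_left_mono) auto
  also have "\<dots> = \<bar>A * (6 * (r + s))\<bar>" using s \<open>s \<le> r\<close> by (simp add: abs_mult)
  also have "\<dots> = b\<^sup>2 * \<bar>s * (s - r) / 2 - 2 * b\<^sup>2\<bar>" unfolding A_eq by (simp add: abs_mult)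
  also have "\<dots> \<le> b\<^sup>2 * (5/2 * b\<^sup>2)" using A_factor by (intro mult_left_mono) auto
  finally have A: "\<bar>A\<bar> \<le> 5/12 * b ^ 3"
    using b by (simp add: field_simps power2_eq_square power3_eq_cube)
  have L: "0 \<le> ln (s + r) - ln (2 * s)" "ln (s + r) - ln (2 * s) \<le> b / (2 * s)"
    using ln_add_sqrt_sum_squares_bounds[OF s, of b] b by (simp_all add: r_def)
  have "B \<le> b\<^sup>2 * s / 2 * (b / (2 * s))" unfolding B_def using L s by (intro mult_left_mono) auto
  also have "\<dots> = b ^ 3 / 4" using s by (simp add: field_simps power2_eq_square power3_eq_cube)
  finally have B: "0 \<le> B" "B \<le> b ^ 3 / 4" unfolding B_def using L s by simp_all
  have "0 < b ^ 3" using b by simp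
  then show ?thesis unfolding split abs_le_iff using A B by linarith
qed

lemma continuous_on_mult_ln_minus_self:
  "continuous_on {0..} (\<lambda>s::real. s * ln s - s)"
  unfolding continuous_on_eq_continuous_within
proof
  fix x :: real assume "x \<in> {0..}"
  show "continuous (at x within {0..}) (\<lambda>s. s * ln s - s)"
  proof (cases "x = 0")
    case True
    have "((\<lambda>s::real. s * ln s - s) \<longlongrightarrow> 0) (at_right 0)" by real_asymp
    then show ?thesis using True by (simp add: continuous_within at_within_Ici_at_right)
  next
    case False
    with \<open>x \<in> {0..}\<close> have "0 < x" by simp
    then have "isCont (\<lambda>s. s * ln s - s) x" by (auto intro!: continuous_intros)
    then show ?thesis by (rule continuous_at_imp_continuous_within)
  qed
qed

lemma continuous_on_gap_primitive2_remainder: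
  fixes b :: real assumes "0 < b"
  shows "continuous_on {0..} (gap_primitive2_remainder b)"
proof -
  define L :: "real \<Rightarrow> real" where "L = (\<lambda>s. s * ln s - s)"
  have "continuous_on {0..} L" unfolding L_def by (rule continuous_on_mult_ln_minus_self)
  moreover have "continuous_on {0..} (gap_primitive2 b)"
    using assms by (intro continuous_at_imp_continuous_on ballI
        DERIV_isCont[OF has_real_derivative_gap_primitive2]) auto
  ultimately have "continuous_on {0..} (\<lambda>s. gap_primitive2 b s - b\<^sup>2 * ((1/4 + ln 2 / 2) * s + L s / 2))"
    by (auto intro!: continuous_intros)
  then show ?thesis unfolding gap_primitive2_remainder_def L_def .
qed

lemma has_integral_by_parts_twice:
  fixes f f' f'' k K1 K2 :: "real \<Rightarrow> real" and a b :: real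
  assumes "a \<le> b"
    and f': "\<And>x. x \<in> {a..b} \<Longrightarrow> (f has_real_derivative f' x) (at x within {a..b})"
    and f'': "\<And>x. x \<in> {a..b} \<Longrightarrow> (f' has_real_derivative f'' x) (at x within {a..b})"
    and K1: "\<And>x. x \<in> {a..b} \<Longrightarrow> (K1 has_real_derivative k x) (at x within {a..b})"
    and K2: "\<And>x. x \<in> {a..b} \<Longrightarrow> (K2 has_real_derivative K1 x) (at x within {a..b})"
    and "continuous_on {a..b} f''"
  shows "((\<lambda>s. f s * k s) has_integral
      f b * K1 b - f' b * K2 b - (f a * K1 a - f' a * K2 a) + integral {a..b} (\<lambda>s. f'' s * K2 s)) {a..b}"
proof -
  have "continuous_on {a..b} K2"
    unfolding continuous_on_eq_continuous_within using DERIV_continuous[OF K2] by blast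
  then have remainder: "((\<lambda>s. f'' s * K2 s) has_integral integral {a..b} (\<lambda>s. f'' s * K2 s)) {a..b}"
    using \<open>continuous_on {a..b} f''\<close>
    by (intro integrable_integral integrable_continuous_interval continuous_on_mult)
  have "((\<lambda>s. f s * k s - f'' s * K2 s) has_integral
      f b * K1 b - f' b * K2 b - (f a * K1 a - f' a * K2 a)) {a..b}"
  proof (rule fundamental_theorem_of_calculus[OF \<open>a \<le> b\<close>])
    fix x assume x: "x \<in> {a..b}"
    have "((\<lambda>s. f s * K1 s - f' s * K2 s) has_real_derivative
        f' x * K1 x + f x * k x - (f'' x * K2 x + f' x * K1 x)) (at x within {a..b})"
      using f'[OF x] f''[OF x] K1[OF x] K2[OF x] by (auto intro!: derivative_eq_intros)
    then show "((\<lambda>s. f s * K1 s - f' s * K2 s) has_vector_derivative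
        f x * k x - f'' x * K2 x) (at x within {a..b})"
      by (simp add: has_real_derivative_iff_has_vector_derivative algebra_simps)
  qed
  from has_integral_add[OF this remainder] show ?thesis by simp
qed

lemma taylor_integral_remainder:
  fixes f f' f'' :: "real \<Rightarrow> real" and a b :: real
  assumes "a \<le> b"
    and "\<And>x. x \<in> {a..b} \<Longrightarrow> (f has_real_derivative f' x) (at x within {a..b})"
    and "\<And>x. x \<in> {a..b} \<Longrightarrow> (f' has_real_derivative f'' x) (at x within {a..b})"
    and "continuous_on {a..b} f''"
  shows "f a = f b - (b - a) * f' b + integral {a..b} (\<lambda>s. f'' s * (s - a))"
proof -
  have "((\<lambda>s. f s * 0) has_integral
      f b * 1 - f' b * (b - a) - (f a * 1 - f' a * (a - a)) + integral {a..b} (\<lambda>s. f'' s * (s - a))) {a..b}"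
    using assms by (intro has_integral_by_parts_twice) (auto intro!: derivative_eq_intros)
  then have "f b - f' b * (b - a) - f a + integral {a..b} (\<lambda>s. f'' s * (s - a)) = 0"
    by (simp add: has_integral_0_eq)
  then show ?thesis by (simp add: algebra_simps)
qed

lemma integral_mult_ln_by_parts:
  fixes g g' :: "real \<Rightarrow> real" and p :: real
  assumes "0 \<le> p"
    and g': "\<And>x. x \<in> {0..p} \<Longrightarrow> (g has_real_derivative g' x) (at x within {0..p})"
    and "continuous_on {0..p} g'"
  shows "integral {0..p} (\<lambda>s. g s * ln s)
    = g p * (p * ln p - p) - integral {0..p} (\<lambda>s. g' s * (s * ln s - s))"
proof -
  have cont: "continuous_on {0..p} (\<lambda>s::real. s * ln s - s)"
    using continuous_on_mult_ln_minus_self by (rule continuous_on_subset) auto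
  have "continuous_on {0..p} g"
    unfolding continuous_on_eq_continuous_within using DERIV_continuous[OF g'] by blast
  \<comment> \<open>ln is not differentiable at 0, so the fundamental theorem is used in its interior form.\<close>
  have "((\<lambda>s. g' s * (s * ln s - s) + g s * ln s) has_integral
      g p * (p * ln p - p) - g 0 * (0 * ln 0 - 0)) {0..p}"
  proof (rule fundamental_theorem_of_calculus_interior_strong[of "{}"])
    fix x assume x: "x \<in> {0<..<p} - {}"
    then have "at x within {0..p} = at x" by (intro at_within_interior) auto
    then have "(g has_real_derivative g' x) (at x)" using g'[of x] x by simp
    then have "((\<lambda>s. g s * (s * ln s - s)) has_real_derivative
        g' x * (x * ln x - x) + g x * ln x) (at x)"
      using x by (auto intro!: derivative_eq_intros)
    then show "((\<lambda>s. g s * (s * ln s - s)) has_vector_derivative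
        g' x * (x * ln x - x) + g x * ln x) (at x)"
      by (simp add: has_real_derivative_iff_has_vector_derivative)
  next
    show "continuous_on {0..p} (\<lambda>s. g s * (s * ln s - s))"
      using \<open>continuous_on {0..p} g\<close> cont by (rule continuous_on_mult)
  qed (use assms in auto)
  moreover have "((\<lambda>s. g' s * (s * ln s - s)) has_integral
      integral {0..p} (\<lambda>s. g' s * (s * ln s - s))) {0..p}"
    using cont assms(3)
    by (intro integrable_integral integrable_continuous_interval continuous_on_mult)
  ultimately have "((\<lambda>s. g' s * (s * ln s - s) + g s * ln s - g' s * (s * ln s - s)) has_integral
      g p * (p * ln p - p) - g 0 * (0 * ln 0 - 0) - integral {0..p} (\<lambda>s. g' s * (s * ln s - s))) {0..p}"
    by (rule has_integral_diff)
  then show ?thesis by (simp add: integral_unique)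
qed

lemma integral_sqrt_gap_expansion_error_eq:
  fixes f f' f'' :: "real \<Rightarrow> real" and p b :: real
  assumes p: "0 < p" and b: "0 < b"
    and f': "\<And>x. x \<in> {0..p} \<Longrightarrow> (f has_real_derivative f' x) (at x within {0..p})"
    and f'': "\<And>x. x \<in> {0..p} \<Longrightarrow> (f' has_real_derivative f'' x) (at x within {0..p})"
    and cont: "continuous_on {0..p} f''"
  shows "integral {0..p} (\<lambda>s. f s * (sqrt (s\<^sup>2 + b\<^sup>2) - s))
            - ( - f 0 / 2 * b\<^sup>2 * ln b
                + (f 0 / 4 + f 0 * ln 2 / 2 + f p * ln p / 2
                   - 1/2 * integral {0..p} (\<lambda>s. f' s * ln s)) * b\<^sup>2)
      = f p * (gap_primitive b p - b\<^sup>2 * (1/4 + ln 2 / 2 + ln p / 2))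
        - f' p * gap_primitive2_remainder b p
        + integral {0..p} (\<lambda>s. f'' s * gap_primitive2_remainder b s)"
proof -
  have p0: "0 \<le> p" using p by simp
  have "((\<lambda>s. f s * (sqrt (s\<^sup>2 + b\<^sup>2) - s)) has_integral
      f p * gap_primitive b p - f' p * gap_primitive2 b p
      - (f 0 * gap_primitive b 0 - f' 0 * gap_primitive2 b 0)
      + integral {0..p} (\<lambda>s. f'' s * gap_primitive2 b s)) {0..p}"
    using b by (intro has_integral_by_parts_twice[OF p0 f' f'' _ _ cont]
        has_field_derivative_at_within[OF has_real_derivative_gap_primitive]
        has_field_derivative_at_within[OF has_real_derivative_gap_primitive2]) auto
  then have parts: "integral {0..p} (\<lambda>s. f s * (sqrt (s\<^sup>2 + b\<^sup>2) - s))
      = f p * gap_primitive b p - f' p * gap_primitive2 b p - f 0 * (b\<^sup>2 * ln b / 2)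
        + integral {0..p} (\<lambda>s. f'' s * gap_primitive2 b s)"
    using b by (simp add: integral_unique gap_primitive_zero gap_primitive2_zero)
  have ln_parts: "integral {0..p} (\<lambda>s. f' s * ln s)
      = f' p * (p * ln p - p) - integral {0..p} (\<lambda>s. f'' s * (s * ln s - s))"
    using p0 f'' cont by (rule integral_mult_ln_by_parts)
  have taylor: "f 0 = f p - p * f' p + integral {0..p} (\<lambda>s. f'' s * s)"
    using taylor_integral_remainder[OF p0 f' f'' cont] by simp
  have "continuous_on {0..p} (gap_primitive2_remainder b)"
    using continuous_on_gap_primitive2_remainder[OF b] by (rule continuous_on_subset) auto
  moreover have "continuous_on {0..p} (\<lambda>s::real. s * ln s - s)"
    using continuous_on_mult_ln_minus_self by (rule continuous_on_subset) auto
  ultimately have "((\<lambda>s. f'' s * gap_primitive2_remainder b s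
        + (b\<^sup>2 * (1/4 + ln 2 / 2)) * (f'' s * s) + b\<^sup>2 / 2 * (f'' s * (s * ln s - s))) has_integral
      integral {0..p} (\<lambda>s. f'' s * gap_primitive2_remainder b s)
        + (b\<^sup>2 * (1/4 + ln 2 / 2)) * integral {0..p} (\<lambda>s. f'' s * s)
        + b\<^sup>2 / 2 * integral {0..p} (\<lambda>s. f'' s * (s * ln s - s))) {0..p}"
    using cont by (intro has_integral_add has_integral_mult_right integrable_integral
        integrable_continuous_interval continuous_on_mult continuous_on_id)
  moreover have "(\<lambda>s. f'' s * gap_primitive2_remainder b s
        + (b\<^sup>2 * (1/4 + ln 2 / 2)) * (f'' s * s) + b\<^sup>2 / 2 * (f'' s * (s * ln s - s)))
      = (\<lambda>s. f'' s * gap_primitive2 b s)"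
    by (simp add: fun_eq_iff gap_primitive2_remainder_def field_simps)
  ultimately have remainder: "integral {0..p} (\<lambda>s. f'' s * gap_primitive2 b s)
      = integral {0..p} (\<lambda>s. f'' s * gap_primitive2_remainder b s)
        + (b\<^sup>2 * (1/4 + ln 2 / 2)) * integral {0..p} (\<lambda>s. f'' s * s)
        + b\<^sup>2 / 2 * integral {0..p} (\<lambda>s. f'' s * (s * ln s - s))"
    by (simp add: integral_unique)
  show ?thesis
    unfolding parts remainder ln_parts taylor gap_primitive2_remainder_def[of b p]
    by (simp add: field_simps)
qed

lemma integral_sqrt_gap_expansion_error:
  fixes f f' f'' :: "real \<Rightarrow> real" and p b M :: real
  assumes p: "0 < p" and b: "0 < b"
    and f': "\<And>x. x \<in> {0..p} \<Longrightarrow> (f has_real_derivative f' x) (at x within {0..p})"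
    and f'': "\<And>x. x \<in> {0..p} \<Longrightarrow> (f' has_real_derivative f'' x) (at x within {0..p})"
    and cont: "continuous_on {0..p} f''"
    and M: "\<And>x. x \<in> {0..p} \<Longrightarrow> \<bar>f'' x\<bar> \<le> M"
  shows "\<bar>integral {0..p} (\<lambda>s. f s * (sqrt (s\<^sup>2 + b\<^sup>2) - s))
            - ( - f 0 / 2 * b\<^sup>2 * ln b
                + (f 0 / 4 + f 0 * ln 2 / 2 + f p * ln p / 2
                   - 1/2 * integral {0..p} (\<lambda>s. f' s * ln s)) * b\<^sup>2)\<bar>
         \<le> (\<bar>f p\<bar> / (2 * p) + \<bar>f' p\<bar> + M * p) * b ^ 3"
proof -
  have p0: "0 \<le> p" using p by simp
  let ?R = "gap_primitive2_remainder b"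
  have bound_p: "\<bar>f p * (gap_primitive b p - b\<^sup>2 * (1/4 + ln 2 / 2 + ln p / 2))\<bar>
      \<le> \<bar>f p\<bar> * (b ^ 3 / (2 * p))"
    unfolding abs_mult using gap_primitive_approx[OF b p] by (rule mult_left_mono) simp
  have bound_R_p: "\<bar>f' p * ?R p\<bar> \<le> \<bar>f' p\<bar> * b ^ 3"
    unfolding abs_mult using gap_primitive2_remainder_bound[OF b p0] by (rule mult_left_mono) simp
  have "continuous_on {0..p} (\<lambda>s. f'' s * ?R s)"
    using continuous_on_gap_primitive2_remainder[OF b]
    by (intro continuous_on_mult cont) (rule continuous_on_subset, auto)
  moreover have "norm (f'' s * ?R s) \<le> M * b ^ 3" if "s \<in> {0..p}" for s
    unfolding real_norm_def abs_mult using M[OF that] gap_primitive2_remainder_bound[OF b, of s] that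
    by (intro mult_mono) auto
  ultimately have bound_integral: "\<bar>integral {0..p} (\<lambda>s. f'' s * ?R s)\<bar> \<le> M * b ^ 3 * p"
    using integral_bound[OF p0] by fastforce
  have "\<bar>f p * (gap_primitive b p - b\<^sup>2 * (1/4 + ln 2 / 2 + ln p / 2)) - f' p * ?R p
      + integral {0..p} (\<lambda>s. f'' s * ?R s)\<bar>
      \<le> \<bar>f p\<bar> * (b ^ 3 / (2 * p)) + \<bar>f' p\<bar> * b ^ 3 + M * b ^ 3 * p"
    using bound_p bound_R_p bound_integral unfolding abs_le_iff by linarith
  also have "\<dots> = (\<bar>f p\<bar> / (2 * p) + \<bar>f' p\<bar> + M * p) * b ^ 3"
    by (simp add: algebra_simps)
  finally show ?thesis by (simp only: integral_sqrt_gap_expansion_error_eq[OF p b f' f'' cont])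
qed

theorem lemma2:
  fixes f f' f'' f''' :: "real \<Rightarrow> real" and p :: real
  assumes p_pos: "p > 0"
    and d1: "\<forall>x\<in>{0..p}. (f has_real_derivative f' x) (at x within {0..p})"
    and d2: "\<forall>x\<in>{0..p}. (f' has_real_derivative f'' x) (at x within {0..p})"
    and c2: "continuous_on {0..p} f''"
    and d3: "\<exists>\<delta>>0. \<exists>M. \<forall>x\<in>{0..p}. x < \<delta> \<longrightarrow>
               (f'' has_real_derivative f''' x) (at x within {0..p}) \<and> \<bar>f''' x\<bar> \<le> M"
  shows "(\<lambda>b. integral {0..p} (\<lambda>s. f s * (sqrt (s\<^sup>2 + b\<^sup>2) - s))
            - ( - f 0 / 2 * b\<^sup>2 * ln b
                + (f 0 / 4 + f 0 * ln 2 / 2 + f p * ln p / 2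
                   - 1/2 * integral {0..p} (\<lambda>s. f' s * ln s)) * b\<^sup>2))
         \<in> O[at_right (0::real)](\<lambda>b. b ^ 3)"
proof -
  obtain M where M: "\<And>x. x \<in> {0..p} \<Longrightarrow> \<bar>f'' x\<bar> \<le> M"
    using compact_imp_bounded[OF compact_continuous_image[OF c2 compact_Icc]]
    unfolding bounded_iff by (metis imageI real_norm_def)
  show ?thesis
    by (intro bigoI[where c = "\<bar>f p\<bar> / (2 * p) + \<bar>f' p\<bar> + M * p"]
        eventually_mono[OF eventually_at_right_less])
      (simp only: real_norm_def abs_of_pos zero_less_power
        integral_sqrt_gap_expansion_error[OF p_pos _ d1[rule_format] d2[rule_format] c2 M])
qed

end
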